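(* The set $\mathtt{REV}$ of injective (equivalently, reversible) cellular automata on $\Sigma^\mathbb{Z}$ is a closed subset of $\mathtt{CA}$ equipped with the pointwise topology.
   Context: $\Sigma$ is a finite alphabet with $|\Sigma|\ge 2$, and $\Sigma^\mathbb{Z}$ carries the product (Cantor) topology. The shift $\sigma:\Sigma^\mathbb{Z}\to\Sigma^\mathbb{Z}$ is $\sigma(x)_i=x_{i+1}$. A cellular automaton (CA) is a continuous map $c:\Sigma^\mathbb{Z}\to\Sigma^\mathbb{Z}$ with $c\circ\sigma=\sigma\circ c$; $\mathtt{CA}$ is the set of all CA on $\Sigma^\mathbb{Z}$, and $\mathtt{REV}\subseteq\mathtt{CA}$ is the set of injective CA. The pointwise topology on $\mathtt{CA}$ is the topology generated by the subbase consisting of the sets $U_x(a)=\{c\in\mathtt{CA}\mid c(x)_0=a\}$ for $x\in\Sigma^\mathbb{Z}$, $a\in\Sigma$. *)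

theory Defs
  imports "HOL-Analysis.Analysis"
begin

definition cantor_top :: "(int \<Rightarrow> 'a) topology" where
  "cantor_top = product_topology (\<lambda>_. discrete_topology (UNIV :: 'a set)) (UNIV :: int set)"

definition shift :: "(int \<Rightarrow> 'a) \<Rightarrow> (int \<Rightarrow> 'a)" where
  "shift x = (\<lambda>i. x (i + 1))"

definition CA :: "((int \<Rightarrow> 'a) \<Rightarrow> (int \<Rightarrow> 'a)) set" where
  "CA = {c. continuous_map cantor_top cantor_top c \<and> c \<circ> shift = shift \<circ> c}"

definition REV :: "((int \<Rightarrow> 'a) \<Rightarrow> (int \<Rightarrow> 'a)) set" where
  "REV = {c \<in> CA. inj c}"

definition U_pt :: "(int \<Rightarrow> 'a) \<Rightarrow> 'a \<Rightarrow> ((int \<Rightarrow> 'a) \<Rightarrow> (int \<Rightarrow> 'a)) set" where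
  "U_pt x a = {c \<in> CA. c x 0 = a}"

definition pointwise_top :: "((int \<Rightarrow> 'a) \<Rightarrow> (int \<Rightarrow> 'a)) topology" where
  "pointwise_top = topology_generated_by {U_pt x a | x a. True}"

end

theory Submission
  imports Defs
begin

(* Take a non-injective CA c.  We exhibit two distinct configurations x, y, both periodic with
   a common period P, such that c x = c y.  The image of a P-periodic configuration under any
   CA d is determined by the P values d (shift_by i x) 0, 0 \<le> i < P, so the set of CA
   agreeing with c on x and on y is a finite intersection of subbasic open sets U_x(a).  It
   contains c and consists of non-injective CA, hence CA - REV is open. *)

definition shift_by :: "int \<Rightarrow> (int \<Rightarrow> 'a) \<Rightarrow> (int \<Rightarrow> 'a)" where
  "shift_by k z = (\<lambda>j. z (j + k))"

lemma shift_by_shift_by [simp]: "shift_by k (shift_by l z) = shift_by (k + l) z"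
  by (simp add: shift_by_def ac_simps)

lemma shift_by_0 [simp]: "shift_by 0 z = z"
  by (simp add: shift_by_def)

lemma CA_commutes_shift_by_nat:
  assumes "c \<in> CA" shows "c (shift_by (int n) z) = shift_by (int n) (c z)"
proof (induction n arbitrary: z)
  case 0 then show ?case by simp
next
  case (Suc n)
  have shift_Suc: "shift_by (int (Suc n)) u = shift (shift_by (int n) u)" for u :: "int \<Rightarrow> 'a"
    by (auto simp: shift_by_def shift_def algebra_simps)
  have "c \<circ> shift = shift \<circ> c" using assms by (simp add: CA_def)
  then have commute: "c (shift u) = shift (c u)" for u by (metis comp_apply)
  have "c (shift_by (int (Suc n)) z) = shift (c (shift_by (int n) z))"
    by (simp only: shift_Suc commute)
  also have "\<dots> = shift_by (int (Suc n)) (c z)"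
    by (simp only: Suc.IH shift_Suc)
  finally show ?case .
qed

lemma CA_commutes_shift_by:
  assumes c: "c \<in> CA" shows "c (shift_by k z) = shift_by k (c z)"
proof (cases "k \<ge> 0")
  case True
  then show ?thesis using CA_commutes_shift_by_nat[OF c, of "nat k"] by simp
next
  case False
  define n where "n = nat (- k)"
  have k: "k = - int n" using False by (simp add: n_def)
  have "c z = c (shift_by (int n) (shift_by k z))" by (simp add: k)
  also have "\<dots> = shift_by (int n) (c (shift_by k z))" by (rule CA_commutes_shift_by_nat[OF c])
  finally have "shift_by k (c z) = shift_by k (shift_by (int n) (c (shift_by k z)))" by simp
  then show ?thesis by (simp add: k)
qed

lemma CA_value_at: "c \<in> CA \<Longrightarrow> c z i = c (shift_by i z) 0"
  using CA_commutes_shift_by[of c i z] by (simp add: shift_by_def)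

definition cylinder :: "nat \<Rightarrow> (int \<Rightarrow> 'a) \<Rightarrow> (int \<Rightarrow> 'a) set" where
  "cylinder r z = {w. \<forall>j. \<bar>j\<bar> \<le> int r \<longrightarrow> w j = z j}"

lemma cylinder_antimono: "r \<le> r' \<Longrightarrow> cylinder r' z \<subseteq> cylinder r z"
  by (auto simp: cylinder_def)

lemma cylinder_eq: "w \<in> cylinder r z \<Longrightarrow> cylinder r w = cylinder r z"
  by (auto simp: cylinder_def)

lemma topspace_cantor_top [simp]: "topspace cantor_top = UNIV"
  by (simp add: cantor_top_def PiE_UNIV_domain)

lemma compact_space_cantor_top: "compact_space (cantor_top :: (int \<Rightarrow> 'a::finite) topology)"
  by (simp add: cantor_top_def compact_space_product_topology compact_space_discrete_topology)

lemma openin_cylinder: "openin cantor_top (cylinder r z)"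
proof -
  define U where "U i = (if \<bar>i\<bar> \<le> int r then {z i} else UNIV)" for i
  have "cylinder r z = Pi\<^sub>E UNIV U"
    by (auto simp: cylinder_def U_def PiE_UNIV_domain Pi_iff split: if_splits)
  moreover have "{i. U i \<noteq> UNIV} \<subseteq> {-int r..int r}"
    by (auto simp: U_def split: if_splits)
  then have "finite {i. U i \<noteq> UNIV}" by (rule finite_subset) simp
  ultimately show ?thesis
    by (simp add: cantor_top_def openin_PiE_gen)
qed

lemma cylinder_neighbourhood_base:
  assumes "openin cantor_top S" "z \<in> S"
  obtains r where "cylinder r z \<subseteq> S"
proof -
  obtain U where U: "finite {i \<in> UNIV. U i \<noteq> topspace (discrete_topology (UNIV :: 'a set))}"
      "z \<in> Pi\<^sub>E UNIV U" "Pi\<^sub>E UNIV U \<subseteq> S"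
    using assms unfolding cantor_top_def openin_product_topology_alt by blast
  define F where "F = {i. U i \<noteq> UNIV}"
  have "finite (nat ` abs ` F)" using U(1) by (simp add: F_def)
  then obtain r where r: "\<And>i. i \<in> F \<Longrightarrow> nat \<bar>i\<bar> \<le> r"
    unfolding finite_nat_set_iff_bounded_le by blast
  have "cylinder r z \<subseteq> Pi\<^sub>E UNIV U"
  proof
    fix w assume w: "w \<in> cylinder r z"
    have "w i \<in> U i" for i
    proof (cases "i \<in> F")
      case True
      then have "nat \<bar>i\<bar> \<le> r" by (rule r)
      then have "\<bar>i\<bar> \<le> int r" by linarith
      then show ?thesis using w U(2) by (auto simp: cylinder_def PiE_UNIV_domain)
    qed (simp add: F_def)
    then show "w \<in> Pi\<^sub>E UNIV U" by (simp add: PiE_UNIV_domain)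
  qed
  then show ?thesis using U(3) by (intro that) (rule order_trans)
qed

lemma compact_space_increasing_cover:
  assumes "compact_space X" "\<And>n. openin X (B n)" "mono B" "topspace X \<subseteq> (\<Union>n::nat. B n)"
  obtains n where "topspace X \<subseteq> B n"
proof -
  obtain \<F> where \<F>: "finite \<F>" "\<F> \<subseteq> range B" "topspace X \<subseteq> \<Union>\<F>"
    using assms(1,2,4) unfolding compact_space_alt by (metis (no_types, lifting) imageE)
  then obtain R where R: "finite R" "\<F> = B ` R" by (meson finite_subset_image)
  have "B n \<subseteq> B (Max (insert 0 R))" if "n \<in> R" for n
    using R(1) that by (intro monoD[OF assms(3)] Max_ge) auto
  then have "\<Union>\<F> \<subseteq> B (Max (insert 0 R))" using R(2) by blast
  with \<F>(3) that show ?thesis by blast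
qed

definition has_radius :: "((int \<Rightarrow> 'a) \<Rightarrow> (int \<Rightarrow> 'b)) \<Rightarrow> nat \<Rightarrow> bool" where
  "has_radius c r \<longleftrightarrow>
     (\<forall>z w i. (\<forall>j. i - int r \<le> j \<and> j \<le> i + int r \<longrightarrow> z j = w j) \<longrightarrow> c z i = c w i)"

(* By compactness, the continuous map z \<mapsto> c z 0 into the discrete alphabet depends only
   on a window [-r, r] that is the same for all z. *)
lemma CA_cell0_uniformly_local:
  assumes c: "(c :: (int \<Rightarrow> 'a::finite) \<Rightarrow> _) \<in> CA"
  obtains r where "\<And>z w. w \<in> cylinder r z \<Longrightarrow> c w 0 = c z 0"
proof -
  define B where "B r = {z. \<forall>w \<in> cylinder r z. c w 0 = c z 0}" for r
  have "openin cantor_top (B r)" for r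
    unfolding openin_subopen[of _ "B r"]
  proof
    fix z assume "z \<in> B r"
    then have "cylinder r z \<subseteq> B r" by (auto simp: B_def cylinder_eq)
    moreover have "z \<in> cylinder r z" by (simp add: cylinder_def)
    ultimately show "\<exists>T. openin cantor_top T \<and> z \<in> T \<and> T \<subseteq> B r"
      using openin_cylinder by blast
  qed
  moreover have "mono B"
    by (auto simp: mono_def B_def dest: cylinder_antimono)
  moreover have "topspace cantor_top \<subseteq> (\<Union>r. B r)"
  proof
    fix z :: "int \<Rightarrow> 'a"
    have cell0: "continuous_map cantor_top (discrete_topology UNIV) (\<lambda>u :: int \<Rightarrow> 'a. u 0)"
      unfolding cantor_top_def by (rule continuous_map_product_projection) simp
    have "continuous_map cantor_top cantor_top c" using c by (simp add: CA_def)
    with cell0 have "continuous_map cantor_top (discrete_topology UNIV) (\<lambda>u. c u 0)"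
      using continuous_map_compose[unfolded o_def] by blast
    then have "openin cantor_top {u \<in> topspace cantor_top. c u 0 \<in> {c z 0}}"
      unfolding continuous_map_def by (simp only: openin_discrete_topology subset_UNIV)
    then obtain r where "cylinder r z \<subseteq> {u. c u 0 = c z 0}"
      by (auto elim: cylinder_neighbourhood_base)
    then show "z \<in> (\<Union>r. B r)" by (auto simp: B_def)
  qed
  ultimately obtain r where "topspace cantor_top \<subseteq> B r"
    using compact_space_increasing_cover[OF compact_space_cantor_top, of B] by blast
  with that show ?thesis by (auto simp: B_def)
qed

(* Uniform locality (the easy half of the Curtis-Hedlund-Lyndon theorem): a CA has a radius. *)
lemma CA_has_radius:
  assumes c: "(c :: (int \<Rightarrow> 'a::finite) \<Rightarrow> _) \<in> CA"
  obtains r where "has_radius c r"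
proof -
  obtain r where r: "\<And>z w. w \<in> cylinder r z \<Longrightarrow> c w 0 = c z 0"
    using CA_cell0_uniformly_local[OF c] by blast
  have "c z i = c w i" if "\<forall>j. i - int r \<le> j \<and> j \<le> i + int r \<longrightarrow> z j = w j" for z w i
  proof -
    have "w (j + i) = z (j + i)" if "\<bar>j\<bar> \<le> int r" for j
      using \<open>\<forall>j. _\<close>[rule_format, of "j + i"] that by (simp add: abs_le_iff)
    then have "shift_by i w \<in> cylinder r (shift_by i z)"
      by (simp add: cylinder_def shift_by_def)
    then show ?thesis using r by (metis CA_value_at[OF c])
  qed
  then show ?thesis using that unfolding has_radius_def by blast
qed

(* A configuration with period P, written in the form convenient for reduction mod P. *)
definition periodic_conf :: "int \<Rightarrow> (int \<Rightarrow> 'a) \<Rightarrow> bool" where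
  "periodic_conf P z \<longleftrightarrow> (\<forall>p. z p = z (p mod P))"

lemma periodic_conf_shift_by:
  assumes "periodic_conf P z" shows "shift_by i z = shift_by (i mod P) z"
proof
  fix j
  have z_mod: "z p = z (p mod P)" for p using assms unfolding periodic_conf_def by blast
  have "z (j + i) = z ((j + i) mod P)" by (rule z_mod)
  also have "(j + i) mod P = (j + i mod P) mod P" by (simp add: mod_add_right_eq)
  also have "z \<dots> = z (j + i mod P)" by (rule z_mod[symmetric])
  finally show "shift_by i z j = shift_by (i mod P) z j" by (simp add: shift_by_def)
qed

lemma CA_value_at_periodic:
  "c \<in> CA \<Longrightarrow> periodic_conf P z \<Longrightarrow> c z i = c (shift_by (i mod P) z) 0"
  by (metis CA_value_at periodic_conf_shift_by)

lemma CA_periodic: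
  assumes "c \<in> CA" "periodic_conf P z" shows "periodic_conf P (c z)"
proof -
  have "c z p = c z (p mod P)" for p
    using CA_value_at_periodic[OF assms, of p] CA_value_at_periodic[OF assms, of "p mod P"] by simp
  then show ?thesis by (simp add: periodic_conf_def)
qed

lemma periodic_conf_eqI:
  assumes "P > 0" "periodic_conf P u" "periodic_conf P v"
    and window: "\<And>i. a \<le> i \<Longrightarrow> i < a + P \<Longrightarrow> u i = v i"
  shows "u = v"
proof
  fix i
  define i' where "i' = a + (i - a) mod P"
  have "a \<le> i'" "i' < a + P" using assms(1) by (simp_all add: i'_def)
  moreover have "i' mod P = i mod P" by (simp add: i'_def mod_add_right_eq)
  moreover have "u p = u (p mod P)" "v p = v (p mod P)" for p
    using assms(2,3) unfolding periodic_conf_def by blast+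
  ultimately show "u i = v i" using window by metis
qed

definition periodise :: "int \<Rightarrow> int \<Rightarrow> (int \<Rightarrow> 'a) \<Rightarrow> (int \<Rightarrow> 'a)" where
  "periodise a P z = (\<lambda>p. z (a + (p - a) mod P))"

lemma periodic_periodise: "periodic_conf P (periodise a P z)"
  unfolding periodic_conf_def periodise_def by (simp add: mod_diff_left_eq)

lemma periodise_block: "a \<le> p \<Longrightarrow> p < a + P \<Longrightarrow> periodise a P z p = z p"
  by (simp add: periodise_def)

lemma periodise_add_period: "periodise a P z (p + P) = periodise a P z p"
proof -
  have "(p + P - a) mod P = ((p - a) + P) mod P" by (simp add: algebra_simps)
  then show ?thesis by (simp add: periodise_def)
qed

lemma periodise_recurrent:
  assumes P: "P > 0" and rep: "\<And>q. a \<le> q \<Longrightarrow> q < a + L \<Longrightarrow> z (q + P) = z q"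
  shows "a \<le> p \<Longrightarrow> p < a + P + L \<Longrightarrow> periodise a P z p = z p"
proof (induction "nat (p - a)" arbitrary: p rule: less_induct)
  case less
  show ?case
  proof (cases "p < a + P")
    case True then show ?thesis using less.prems by (simp add: periodise_block)
  next
    case False
    define q where "q = p - P"
    have q: "a \<le> q" "q < a + L" "nat (q - a) < nat (p - a)"
      using False less.prems P by (auto simp: q_def)
    have "periodise a P z p = periodise a P z q" using periodise_add_period[of a P z q] by (simp add: q_def)
    also have "\<dots> = z q" using q(2) P by (intro less.hyps[OF q(3) q(1)]) linarith
    also have "\<dots> = z p" using rep[OF q(1,2)] by (simp add: q_def)
    finally show ?thesis .
  qed
qed

lemma has_radiusD:
  "has_radius c r \<Longrightarrow> (\<And>j. i - int r \<le> j \<Longrightarrow> j \<le> i + int r \<Longrightarrow> z j = w j) \<Longrightarrow> c z i = c w i"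
  unfolding has_radius_def by blast

(* If c x = c y and both x and y repeat with shift P on a window of length 2r + 1 starting at a,
   then periodising both at a keeps their images equal: every cell of a period sees only
   cells where the periodisations coincide with x and y. *)
lemma CA_periodise_recurrent:
  assumes c: "c \<in> CA" and rad: "has_radius c r" and cxy: "c x = c y" and P: "P > 0"
    and rep: "\<And>q. a \<le> q \<Longrightarrow> q < a + (2 * int r + 1) \<Longrightarrow> x (q + P) = x q \<and> y (q + P) = y q"
  shows "c (periodise a P x) = c (periodise a P y)"
proof (rule periodic_conf_eqI[OF P CA_periodic[OF c periodic_periodise] CA_periodic[OF c periodic_periodise]])
  fix i assume i: "a + int r \<le> i" "i < a + int r + P"
  have window: "a \<le> j" "j < a + P + (2 * int r + 1)" if "i - int r \<le> j" "j \<le> i + int r" for j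
    using i that by linarith+
  have "periodise a P x j = x j" "periodise a P y j = y j"
    if "a \<le> j" "j < a + P + (2 * int r + 1)" for j
    using rep by (intro periodise_recurrent[OF P _ that]; blast)+
  then have "c (periodise a P x) i = c x i" "c (periodise a P y) i = c y i"
    using window by (auto intro!: has_radiusD[OF rad])
  then show "c (periodise a P x) i = c (periodise a P y) i" by (simp add: cxy)
qed

(* If c x = c y and x, y agree on the 2r cells at either end of the block [a, a + P), then
   periodising both at a keeps their images equal: cells near the seam see only cells where
   the periodisations coincide, all other cells see x and y themselves. *)
lemma CA_periodise_agreeing_borders:
  assumes c: "c \<in> CA" and rad: "has_radius c r" and cxy: "c x = c y" and P: "2 * int r < P"
    and left: "\<And>j. a \<le> j \<Longrightarrow> j < a + 2 * int r \<Longrightarrow> x j = y j"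
    and right: "\<And>j. a + P - 2 * int r \<le> j \<Longrightarrow> j < a + P \<Longrightarrow> x j = y j"
  shows "c (periodise a P x) = c (periodise a P y)"
proof -
  have P0: "P > 0" using P by linarith
  show ?thesis
  proof (rule periodic_conf_eqI[OF P0 CA_periodic[OF c periodic_periodise] CA_periodic[OF c periodic_periodise]])
    fix i assume i: "a + int r \<le> i" "i < a + int r + P"
    show "c (periodise a P x) i = c (periodise a P y) i"
    proof (cases "i + int r < a + P")
      case True
      then have "c (periodise a P x) i = c x i" "c (periodise a P y) i = c y i"
        using i by (auto intro!: has_radiusD[OF rad] simp: periodise_block)
      then show ?thesis by (simp add: cxy)
    next
      case False
      have "periodise a P x j = periodise a P y j" if j: "i - int r \<le> j" "j \<le> i + int r" for j
      proof (cases "j < a + P")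
        case True
        then show ?thesis using i j False by (simp add: periodise_block right)
      next
        case False
        then have "periodise a P z j = z (j - P)" for z :: "int \<Rightarrow> 'a"
          using periodise_add_period[of a P z "j - P"] i j P by (simp add: periodise_block)
        then show ?thesis using i j False by (simp add: left)
      qed
      then show ?thesis by (rule has_radiusD[OF rad])
    qed
  qed
qed

lemma infinite_pigeonhole_int:
  assumes "infinite (D :: int set)" "finite (V ` D)"
  obtains a b where "a \<in> D" "a < b" "V a = V b"
proof -
  have "\<not> inj_on V D" using assms finite_imageD by blast
  then obtain a1 a2 where "a1 \<in> D" "a2 \<in> D" "a1 \<noteq> a2" "V a1 = V a2"
    unfolding inj_on_def by blast
  then show ?thesis using that by (cases "a1 < a2") (auto simp: not_less_iff_gr_or_eq)
qed

(* x and y differ at infinitely many cells: two such cells a < b carry the same pattern of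
   the pair (x, y) on windows of length 2r + 1, and we periodise over [a, b). *)
lemma periodic_witness_infinite_difference:
  assumes c: "(c :: (int \<Rightarrow> 'a::finite) \<Rightarrow> _) \<in> CA" and rad: "has_radius c r"
    and cxy: "c x = c y" and inf: "infinite {j. x j \<noteq> y j}"
  shows "\<exists>a P. P > 0 \<and> periodise a P x \<noteq> periodise a P y \<and> c (periodise a P x) = c (periodise a P y)"
proof -
  define V where "V i = map (\<lambda>n. (x (i + int n), y (i + int n))) [0..<2 * r + 1]" for i
  have "V ` {j. x j \<noteq> y j} \<subseteq> {ps. set ps \<subseteq> UNIV \<and> length ps = 2 * r + 1}"
    by (auto simp: V_def)
  then have "finite (V ` {j. x j \<noteq> y j})"
    by (rule finite_subset) (rule finite_lists_length_eq[OF finite_class.finite_UNIV])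
  then obtain a b where ab: "x a \<noteq> y a" "a < b" "V a = V b"
    using infinite_pigeonhole_int[OF inf] by blast
  define P where "P = b - a"
  have P: "P > 0" using ab(2) by (simp add: P_def)
  have "x (q + P) = x q \<and> y (q + P) = y q" if "a \<le> q" "q < a + (2 * int r + 1)" for q
  proof -
    have "nat (q - a) < 2 * r + 1" using that by linarith
    then have "V b ! nat (q - a) = (x (b + (q - a)), y (b + (q - a)))"
      and "V a ! nat (q - a) = (x q, y q)" using that by (simp_all add: V_def del: upt_Suc)
    then show ?thesis using ab(3) by (simp add: P_def algebra_simps)
  qed
  then have "c (periodise a P x) = c (periodise a P y)"
    by (rule CA_periodise_recurrent[OF c rad cxy P])
  moreover have "periodise a P x a \<noteq> periodise a P y a"
    using ab(1) P by (simp add: periodise_block)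
  then have "periodise a P x \<noteq> periodise a P y" by metis
  ultimately show ?thesis using P by blast
qed

(* x and y differ only on a finite set with extreme points s \<le> t: periodise over a block
   containing [s, t] together with 2r agreeing cells at either end. *)
lemma periodic_witness_finite_difference:
  assumes c: "c \<in> CA" and rad: "has_radius c r"
    and cxy: "c x = c y" and "x \<noteq> y" and fin: "finite {j. x j \<noteq> y j}"
  shows "\<exists>a P. P > 0 \<and> periodise a P x \<noteq> periodise a P y \<and> c (periodise a P x) = c (periodise a P y)"
proof -
  define D where "D = {j. x j \<noteq> y j}"
  have "D \<noteq> {}" using \<open>x \<noteq> y\<close> by (auto simp: D_def)
  define s where "s = Min D"
  define t where "t = Max D"
  have finD: "finite D" using fin by (simp add: D_def)
  have sD: "s \<in> D" unfolding s_def using finD \<open>D \<noteq> {}\<close> by (rule Min_in)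
  then have st: "s \<le> t" unfolding t_def using finD by simp
  have outside: "x j = y j" if "j < s \<or> t < j" for j
  proof (rule ccontr)
    assume "x j \<noteq> y j"
    then have "s \<le> j" "j \<le> t" using finD by (simp_all add: s_def t_def D_def)
    then show False using that by linarith
  qed
  define a where "a = s - 2 * int r"
  define P where "P = t - s + 1 + 4 * int r"
  have P: "2 * int r < P" using st by (simp add: P_def)
  have "c (periodise a P x) = c (periodise a P y)"
    using outside by (intro CA_periodise_agreeing_borders[OF c rad cxy P]) (simp_all add: a_def P_def)
  moreover have "periodise a P x s \<noteq> periodise a P y s"
    using sD st by (simp add: periodise_block a_def P_def D_def)
  then have "periodise a P x \<noteq> periodise a P y" by metis
  moreover have "P > 0" using P by linarith
  ultimately show ?thesis by blast
qed

lemma noninjective_periodic_witness: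
  assumes c: "(c :: (int \<Rightarrow> 'a::finite) \<Rightarrow> _) \<in> CA" and "\<not> inj c"
  obtains P x y where "P > 0" "periodic_conf P x" "periodic_conf P y" "x \<noteq> y" "c x = c y"
proof -
  obtain x y where xy: "x \<noteq> y" "c x = c y" using \<open>\<not> inj c\<close> unfolding inj_def by blast
  obtain r where rad: "has_radius c r" using CA_has_radius[OF c] by blast
  have "\<exists>a P. P > 0 \<and> periodise a P x \<noteq> periodise a P y \<and> c (periodise a P x) = c (periodise a P y)"
    using periodic_witness_infinite_difference[OF c rad xy(2)]
      periodic_witness_finite_difference[OF c rad xy(2,1)] by blast
  then show ?thesis using that periodic_periodise by blast
qed

lemma topspace_pointwise_top: "topspace pointwise_top = CA"
proof -
  have "c \<in> U_pt (\<lambda>_. undefined) (c (\<lambda>_. undefined) 0)" if "c \<in> CA" for c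
    using that by (simp add: U_pt_def)
  then have "\<Union>{U_pt x a |x a. True} = CA" by (auto simp: U_pt_def)
  then show ?thesis by (simp add: pointwise_top_def)
qed

lemma openin_U_pt: "openin pointwise_top (U_pt x a)"
  unfolding pointwise_top_def openin_topology_generated_by_iff
  by (rule generate_topology_on.Basis) blast

(* For a P-periodic configuration x, agreeing with c on x is an open condition in the pointwise
   topology: it is the conjunction of the P conditions d(shift_by i x)(0) = c(x)(i), i < P. *)
lemma openin_agree_at_periodic:
  assumes c: "c \<in> CA" and P: "P > 0" and x: "periodic_conf P x"
  shows "openin pointwise_top {d \<in> CA. d x = c x}"
proof -
  have "{d \<in> CA. d x = c x} = (\<Inter>i \<in> {0..<P}. U_pt (shift_by i x) (c x i))"
  proof (intro equalityI subsetI)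
    fix d assume "d \<in> {d \<in> CA. d x = c x}"
    then have "d \<in> CA" "d (shift_by i x) 0 = c x i" for i by (auto simp flip: CA_value_at)
    then show "d \<in> (\<Inter>i \<in> {0..<P}. U_pt (shift_by i x) (c x i))"
      by (simp add: U_pt_def)
  next
    fix d assume d: "d \<in> (\<Inter>i \<in> {0..<P}. U_pt (shift_by i x) (c x i))"
    then have "d \<in> CA" using P by (auto simp: U_pt_def)
    have "d x i = c x i" for i
    proof -
      have "d x i = d (shift_by (i mod P) x) 0" by (rule CA_value_at_periodic[OF \<open>d \<in> CA\<close> x])
      also have "\<dots> = c x (i mod P)" using d P by (simp add: U_pt_def)
      also have "\<dots> = c x i" using CA_periodic[OF c x] by (simp add: periodic_conf_def)
      finally show ?thesis .
    qed
    with \<open>d \<in> CA\<close> show "d \<in> {d \<in> CA. d x = c x}" by blast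
  qed
  moreover have "openin pointwise_top (\<Inter>i \<in> {0..<P}. U_pt (shift_by i x) (c x i))"
    using P by (intro openin_Inter) (auto simp: openin_U_pt)
  ultimately show ?thesis by simp
qed

theorem proposition3p2:
  assumes "CARD('a::finite) \<ge> 2"
  shows "closedin (pointwise_top :: ((int \<Rightarrow> 'a) \<Rightarrow> (int \<Rightarrow> 'a)) topology) REV"
proof -
  have "openin pointwise_top (CA - (REV :: ((int \<Rightarrow> 'a) \<Rightarrow> (int \<Rightarrow> 'a)) set))"
    unfolding openin_subopen[of _ "CA - REV"]
  proof
    fix c :: "(int \<Rightarrow> 'a) \<Rightarrow> (int \<Rightarrow> 'a)" assume "c \<in> CA - REV"
    then have c: "c \<in> CA" "\<not> inj c" by (auto simp: REV_def)
    obtain P x y where P: "P > 0" and periodic: "periodic_conf P x" "periodic_conf P y"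
      and xy: "x \<noteq> y" "c x = c y"
      using noninjective_periodic_witness[OF c] by blast
    define N where "N = {d \<in> CA. d x = c x} \<inter> {d \<in> CA. d y = c y}"
    have "openin pointwise_top N"
      unfolding N_def using c(1) P periodic by (intro openin_Int openin_agree_at_periodic)
    moreover have "c \<in> N" using c(1) by (simp add: N_def)
    moreover have "N \<subseteq> CA - REV" using xy by (auto simp: N_def REV_def inj_def)
    ultimately show "\<exists>T. openin pointwise_top T \<and> c \<in> T \<and> T \<subseteq> CA - REV" by blast
  qed
  moreover have "REV \<subseteq> CA" by (auto simp: REV_def)
  ultimately show ?thesis unfolding closedin_def topspace_pointwise_top by blast
qed

end
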